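(* Let $m\ge1$, let $W$ be a B-DMC, and let $E[J_n]$ be as in the context. For integers $k\ge0$ define $E[\hat J_k]=\min_{i\in\{0,1,\dots,m-1\}}E[J_{km-i}]$. Then $E[\hat J_k]\ge E[\hat J_{k-1}]$ for every $k\ge1$.
   Context: Fix an integer $m\ge1$. Define integers $N(n)$ by $N(n)=1$ for $1-m\le n\le 0$ and $N(n)=N(n-1)+N(n-m)$ for $n\ge1$; write $\mathbb N_n=\{1,\dots,N(n)\}$ (so $\mathbb N_n=\{1\}$ for $n\le 0$, and $\mathbb N_{n-m}\subseteq\mathbb N_{n-1}$). Define vectors $\mathbf s_n^{(i)}\in\{+,-,\bigstar\}^n$ for $n\ge0$, $i\in\mathbb N_n$, recursively: $\mathbf s_0^{(1)}$ is the empty vector, and for $n\ge1$: $\mathbf s_n^{(j)}=(\mathbf s_{n-1}^{(j)},+)$ and $\mathbf s_n^{(j+N(n-1))}=(\mathbf s_{n-1}^{(j)},-)$ for $j\in\mathbb N_{n-m}$, while $\mathbf s_n^{(j)}=(\mathbf s_{n-1}^{(j)},\bigstar)$ for $j\in\mathbb N_{n-1}\setminus\mathbb N_{n-m}$. Let $\mathcal S_n=\{\mathbf s_n^{(i)}:i\in\mathbb N_n\}$ for $n\ge1$. A B-DMC $V$ is a channel with input alphabet $\{0,1\}$, a finite output alphabet $\mathcal Y$ and transition probabilities $V(y|x)$. With base-2 logarithms and uniform input: $I(V)=\sum_{y}\sum_{x}\frac12V(y|x)\log\frac{V(y|x)}{\frac12V(y|0)+\frac12V(y|1)}$, $Z(V)=\sum_y\sqrt{V(y|0)V(y|1)}$,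 $J(V)=\log\frac{2}{1+Z(V)}$. For B-DMCs $V':\{0,1\}\to\mathcal Y_1$ and $V'':\{0,1\}\to\mathcal Y_2$ define $V'\boxminus V'':\{0,1\}\to\mathcal Y_1\times\mathcal Y_2$ by $(V'\boxminus V'')(y_1,y_2|x_1)=\sum_{x_2\in\{0,1\}}\frac12V'(y_1|x_1\oplus x_2)V''(y_2|x_2)$, and $V'\boxplus V'':\{0,1\}\to\mathcal Y_1\times\mathcal Y_2\times\{0,1\}$ by $(V'\boxplus V'')(y_1,y_2,x_1|x_2)=\frac12V'(y_1|x_1\oplus x_2)V''(y_2|x_2)$. Fix a B-DMC $W$. For every finite string $\mathbf t=(t_1,\dots,t_n)\in\{+,-,\bigstar\}^n$, $n\ge0$, define a B-DMC $W_{\mathbf t}$ recursively: $W_{\emptyset}=W$ for the empty string; for $n\ge1$ let $\mathbf t'=(t_1,\dots,t_{n-1})$ and $\mathbf t''=(t_1,\dots,t_{n-m})$ (the empty string if $n\le m$); then $W_{\mathbf t}=W_{\mathbf t''}\boxplus W_{\mathbf t'}$ if $t_n=+$, $W_{\mathbf t}=W_{\mathbf t''}\boxminus W_{\mathbf t'}$ if $t_n=-$, and $W_{\mathbf t}=W_{\mathbf t'}$ if $t_n=\bigstar$. For $n\ge1$ let $E[J_n]=\frac{1}{N(n)}\sum_{\mathbf s\in\mathcal S_n}J(W_{\mathbf s})$, and for $n\le0$ let $E[J_n]=J(W)$. *)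

theory Defs
  imports Complex_Main
begin

(* Output symbols of synthesized channels: base outputs, outputs of a minus
   combination (y1,y2), and outputs of a plus combination (y1,y2,x1). *)
datatype 'a chout = Leaf 'a | MNode "'a chout" "'a chout" | PNode "'a chout" "'a chout" bool

(* A channel: finite output alphabet together with transition probabilities V y x.
   Input alphabet {0,1} is rendered as bool (False = 0, True = 1), xor = (\<noteq>). *)
type_synonym 'a chan = "'a chout set \<times> ('a chout \<Rightarrow> bool \<Rightarrow> real)"

definition bdmc :: "'a set \<Rightarrow> ('a \<Rightarrow> bool \<Rightarrow> real) \<Rightarrow> bool" where
  "bdmc Y V \<longleftrightarrow> finite Y \<and> Y \<noteq> {} \<and> (\<forall>y\<in>Y. \<forall>x. V y x \<ge> 0) \<and> (\<forall>x. (\<Sum>y\<in>Y. V y x) = 1)"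

definition base_chan :: "'a set \<Rightarrow> ('a \<Rightarrow> bool \<Rightarrow> real) \<Rightarrow> 'a chan" where
  "base_chan Y V = (Leaf ` Y, \<lambda>y x. case y of Leaf a \<Rightarrow> V a x | _ \<Rightarrow> 0)"

definition chan_minus :: "'a chan \<Rightarrow> 'a chan \<Rightarrow> 'a chan" where
  "chan_minus C1 C2 = ((\<lambda>(y1,y2). MNode y1 y2) ` (fst C1 \<times> fst C2),
     \<lambda>y x1. case y of MNode y1 y2 \<Rightarrow>
        (\<Sum>x2\<in>(UNIV::bool set). (1/2) * snd C1 y1 (x1 \<noteq> x2) * snd C2 y2 x2) | _ \<Rightarrow> 0)"

definition chan_plus :: "'a chan \<Rightarrow> 'a chan \<Rightarrow> 'a chan" where
  "chan_plus C1 C2 = ((\<lambda>(y1,y2,u). PNode y1 y2 u) ` (fst C1 \<times> fst C2 \<times> (UNIV::bool set)),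
     \<lambda>y x2. case y of PNode y1 y2 x1 \<Rightarrow> (1/2) * snd C1 y1 (x1 \<noteq> x2) * snd C2 y2 x2 | _ \<Rightarrow> 0)"

definition bhatt :: "'a chan \<Rightarrow> real" where
  "bhatt C = (\<Sum>y\<in>fst C. sqrt (snd C y False * snd C y True))"

definition Jf :: "'a chan \<Rightarrow> real" where
  "Jf C = log 2 (2 / (1 + bhatt C))"

datatype sym = SPlus | SMinus | SStar

(* Wc W m t n is the channel W_{(t_1,...,t_n)} of the length-n prefix of t.
   For m \<ge> 1, Suc n - m = n - (m - 1). *)
function Wc :: "'a chan \<Rightarrow> nat \<Rightarrow> sym list \<Rightarrow> nat \<Rightarrow> 'a chan" where
  "Wc W m t 0 = W"
| "Wc W m t (Suc n) = (case t ! n of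
      SPlus \<Rightarrow> chan_plus (Wc W m t (n - (m - 1))) (Wc W m t n)
    | SMinus \<Rightarrow> chan_minus (Wc W m t (n - (m - 1))) (Wc W m t n)
    | SStar \<Rightarrow> Wc W m t n)"
  by pat_completeness auto
termination by (relation "measure (\<lambda>(W,m,t,n). n)") auto

definition Wt :: "'a chan \<Rightarrow> nat \<Rightarrow> sym list \<Rightarrow> 'a chan" where
  "Wt W m t = Wc W m t (length t)"

(* N(n) for n \<ge> 0; values for negative arguments are 1, matched by nat truncation.
   For m \<ge> 1, n - (m - 1) = (n+1) - m (truncated at 0). *)
fun Nn :: "nat \<Rightarrow> nat \<Rightarrow> nat" where
  "Nn m 0 = 1"
| "Nn m (Suc n) = Nn m n + Nn m (n - (m - 1))"

definition Nz :: "nat \<Rightarrow> int \<Rightarrow> nat" where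
  "Nz m n = (if n \<le> 0 then 1 else Nn m (nat n))"

fun Slist :: "nat \<Rightarrow> nat \<Rightarrow> sym list list" where
  "Slist m 0 = [[]]"
| "Slist m (Suc n) =
     (let L = Slist m n; k = Nn m (n - (m - 1)) in
       map (\<lambda>s. s @ [SPlus]) (take k L) @ map (\<lambda>s. s @ [SStar]) (drop k L)
       @ map (\<lambda>s. s @ [SMinus]) (take k L))"

definition EJ :: "nat \<Rightarrow> 'a chan \<Rightarrow> int \<Rightarrow> real" where
  "EJ m W n = (if n \<le> 0 then Jf W
     else (1 / real (Nz m n)) * (\<Sum>s\<in>set (Slist m (nat n)). Jf (Wt W m s)))"

definition EJhat :: "nat \<Rightarrow> 'a chan \<Rightarrow> int \<Rightarrow> real" where
  "EJhat m W k = Min ((\<lambda>i. EJ m W (k * int m - int i)) ` {0..<m})"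

end

theory Submission
  imports Defs
begin

text \<open>
  In terms of Bhattacharyya parameters, Z(W' \<boxplus> W'') = Z(W') Z(W'') and
  Z(W' \<boxminus> W'') \<le> Z(W') + Z(W'') - Z(W') Z(W''), from which
  J(W' \<boxplus> W'') + J(W' \<boxminus> W'') \<ge> J(W') + J(W'').
  In the recursion defining S_n, the first N(n-m) vectors of S_{n-1} are extended by + and
  by -, and the vectors s of length n-1 extended this way have prefixes of length n-m running
  exactly through S_{n-m}; hence
  N(n) E[J_n] \<ge> N(n-1) E[J_{n-1}] + N(n-m) E[J_{n-m}], so
  E[J_n] \<ge> min (E[J_{n-1}], E[J_{n-m}]).
  A lower bound holding on m consecutive indices therefore holds on all later ones.
\<close>

definition is_channel :: "'a chan \<Rightarrow> bool" where
  "is_channel C \<longleftrightarrow> finite (fst C) \<and> (\<forall>y\<in>fst C. \<forall>x. snd C y x \<ge> 0) \<and> (\<forall>x. (\<Sum>y\<in>fst C. snd C y x) = 1)"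

lemma sum_chan_plus_outputs:
  fixes f :: "'a chout \<Rightarrow> real"
  assumes "finite A" "finite B"
  shows "sum f ((\<lambda>(y1,y2,u). PNode y1 y2 u) ` (A \<times> B \<times> (UNIV::bool set)))
     = (\<Sum>y1\<in>A. \<Sum>y2\<in>B. f (PNode y1 y2 False) + f (PNode y1 y2 True))"
proof -
  have inj: "inj_on (\<lambda>(y1,y2,u). PNode y1 y2 u) (A \<times> B \<times> (UNIV::bool set))"
    by (auto simp: inj_on_def)
  have "sum f ((\<lambda>(y1,y2,u). PNode y1 y2 u) ` (A \<times> B \<times> (UNIV::bool set)))
      = (\<Sum>(y1,y2,u)\<in>A \<times> B \<times> (UNIV::bool set). f (PNode y1 y2 u))"
    by (subst sum.reindex[OF inj]) (simp add: case_prod_unfold)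
  also have "\<dots> = (\<Sum>y1\<in>A. \<Sum>(y2,u)\<in>B \<times> (UNIV::bool set). f (PNode y1 y2 u))"
    by (subst sum.cartesian_product[symmetric]) simp
  also have "\<dots> = (\<Sum>y1\<in>A. \<Sum>y2\<in>B. \<Sum>u\<in>(UNIV::bool set). f (PNode y1 y2 u))"
    by (subst sum.cartesian_product[symmetric]) simp
  also have "\<dots> = (\<Sum>y1\<in>A. \<Sum>y2\<in>B. f (PNode y1 y2 False) + f (PNode y1 y2 True))"
    by (simp add: UNIV_bool)
  finally show ?thesis .
qed

lemma sum_chan_minus_outputs:
  fixes f :: "'a chout \<Rightarrow> real"
  assumes "finite A" "finite B"
  shows "sum f ((\<lambda>(y1,y2). MNode y1 y2) ` (A \<times> B))
     = (\<Sum>y1\<in>A. \<Sum>y2\<in>B. f (MNode y1 y2))"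
proof -
  have inj: "inj_on (\<lambda>(y1,y2). MNode y1 y2) (A \<times> B)"
    by (auto simp: inj_on_def)
  show ?thesis
    by (subst sum.reindex[OF inj]) (simp add: case_prod_unfold sum.cartesian_product)
qed

lemma is_channel_base_chan: "bdmc Y V \<Longrightarrow> is_channel (base_chan Y V)"
  unfolding is_channel_def bdmc_def base_chan_def
  by (auto simp: sum.reindex inj_on_def)

lemma is_channel_chan_plus:
  assumes "is_channel A" "is_channel B"
  shows "is_channel (chan_plus A B)"
proof -
  have fa: "finite (fst A)" and fb: "finite (fst B)" using assms by (auto simp: is_channel_def)
  have s: "(\<Sum>y\<in>fst (chan_plus A B). snd (chan_plus A B) y x) = 1" for x
  proof -
    have "(\<Sum>y\<in>fst (chan_plus A B). snd (chan_plus A B) y x)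
       = (\<Sum>y1\<in>fst A. \<Sum>y2\<in>fst B. (1/2) * snd A y1 (False \<noteq> x) * snd B y2 x + (1/2) * snd A y1 (True \<noteq> x) * snd B y2 x)"
      unfolding chan_plus_def by (simp add: sum_chan_plus_outputs[OF fa fb])
    also have "\<dots> = (\<Sum>y1\<in>fst A. (1/2) * (snd A y1 (False \<noteq> x) + snd A y1 (True \<noteq> x)) * (\<Sum>y2\<in>fst B. snd B y2 x))"
      by (simp add: sum_distrib_left algebra_simps sum.distrib sum_divide_distrib)
    also have "\<dots> = (\<Sum>y1\<in>fst A. (1/2) * (snd A y1 (False \<noteq> x) + snd A y1 (True \<noteq> x)))"
      using assms(2) by (simp add: is_channel_def)
    also have "\<dots> = 1" using assms(1) by (simp add: is_channel_def sum.distrib sum_divide_distrib[symmetric])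
    finally show ?thesis .
  qed
  show ?thesis using assms fa fb s unfolding is_channel_def
    by (auto simp: chan_plus_def)
qed

lemma is_channel_chan_minus:
  assumes "is_channel A" "is_channel B"
  shows "is_channel (chan_minus A B)"
proof -
  have fa: "finite (fst A)" and fb: "finite (fst B)" using assms by (auto simp: is_channel_def)
  have s: "(\<Sum>y\<in>fst (chan_minus A B). snd (chan_minus A B) y x) = 1" for x
  proof -
    have "(\<Sum>y\<in>fst (chan_minus A B). snd (chan_minus A B) y x)
       = (\<Sum>y1\<in>fst A. \<Sum>y2\<in>fst B. (1/2) * snd A y1 (x \<noteq> False) * snd B y2 False + (1/2) * snd A y1 (x \<noteq> True) * snd B y2 True)"
      unfolding chan_minus_def by (simp add: sum_chan_minus_outputs[OF fa fb] UNIV_bool)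
    also have "\<dots> = (1/2) * (\<Sum>y1\<in>fst A. snd A y1 (x \<noteq> False)) * (\<Sum>y2\<in>fst B. snd B y2 False)
        + (1/2) * (\<Sum>y1\<in>fst A. snd A y1 (x \<noteq> True)) * (\<Sum>y2\<in>fst B. snd B y2 True)"
      by (simp add: sum_distrib_left sum_distrib_right algebra_simps sum.distrib sum_divide_distrib)
    also have "\<dots> = 1" using assms by (simp add: is_channel_def)
    finally show ?thesis .
  qed
  have nn: "\<forall>y\<in>fst (chan_minus A B). \<forall>x. snd (chan_minus A B) y x \<ge> 0"
    using assms unfolding is_channel_def chan_minus_def
    by (auto intro!: sum_nonneg)
  show ?thesis using fa fb s nn unfolding is_channel_def
    by (auto simp: chan_minus_def)
qed

lemma bhatt_bounds:
  assumes "is_channel C"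
  shows "0 \<le> bhatt C" "bhatt C \<le> 1"
proof -
  show "0 \<le> bhatt C" using assms unfolding bhatt_def is_channel_def
    by (auto intro!: sum_nonneg)
  have "bhatt C \<le> (\<Sum>y\<in>fst C. (snd C y False + snd C y True) / 2)"
    unfolding bhatt_def
  proof (rule sum_mono)
    fix y assume "y \<in> fst C"
    then have a: "snd C y False \<ge> 0" "snd C y True \<ge> 0" using assms by (auto simp: is_channel_def)
    show "sqrt (snd C y False * snd C y True) \<le> (snd C y False + snd C y True) / 2"
      using arith_geo_mean_sqrt[OF a] by simp
  qed
  also have "\<dots> = 1" using assms by (simp add: is_channel_def sum.distrib sum_divide_distrib[symmetric])
  finally show "bhatt C \<le> 1" .
qed

lemma bhatt_chan_plus:
  assumes "is_channel A" "is_channel B"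
  shows "bhatt (chan_plus A B) = bhatt A * bhatt B"
proof -
  have fa: "finite (fst A)" and fb: "finite (fst B)" using assms by (auto simp: is_channel_def)
  have "bhatt (chan_plus A B) = (\<Sum>y1\<in>fst A. \<Sum>y2\<in>fst B.
      sqrt (snd A y1 False * snd A y1 True) * sqrt (snd B y2 False * snd B y2 True))"
  proof -
    have h4: "sqrt (4::real) = 2" by (rule real_sqrt_unique) auto
    have e: "sqrt (a*c*(b*d)/4) + sqrt (b*c*(a*d)/4) = sqrt (a * b) * sqrt (c * d)" for a b c d :: real
    proof -
      have "a*c*(b*d) = (a*b)*(c*d)" "b*c*(a*d) = (a*b)*(c*d)" by (simp_all add: algebra_simps)
      then show ?thesis by (simp add: real_sqrt_divide real_sqrt_mult h4)
    qed
    show ?thesis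
      unfolding bhatt_def chan_plus_def
      by (simp add: sum_chan_plus_outputs[OF fa fb]) (intro sum.cong refl e)
  qed
  also have "\<dots> = bhatt A * bhatt B"
    unfolding bhatt_def by (simp add: sum_product)
  finally show ?thesis .
qed

lemma sqrt_mixture_product_le:
  fixes a b c d :: real
  assumes "a \<ge> 0" "b \<ge> 0" "c \<ge> 0" "d \<ge> 0"
  shows "sqrt ((1/2*(a*c+b*d)) * (1/2*(b*c+a*d)))
     \<le> 1/2 * (sqrt (c*d) * (a+b) + sqrt (a*b) * (c+d)) - sqrt (a*b) * sqrt (c*d)"
proof -
  define \<alpha> where "\<alpha> = sqrt a"
  define \<beta> where "\<beta> = sqrt b"
  define \<gamma> where "\<gamma> = sqrt c"
  define \<delta> where "\<delta> = sqrt d"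
  have ab: "a = \<alpha>^2" "b = \<beta>^2" "c = \<gamma>^2" "d = \<delta>^2" using assms
    by (simp_all add: \<alpha>_def \<beta>_def \<gamma>_def \<delta>_def)
  have nn: "\<alpha> \<ge> 0" "\<beta> \<ge> 0" "\<gamma> \<ge> 0" "\<delta> \<ge> 0" using assms
    by (simp_all add: \<alpha>_def \<beta>_def \<gamma>_def \<delta>_def)
  have sab: "sqrt (a*b) = \<alpha>*\<beta>" using nn by (simp add: ab real_sqrt_mult)
  have scd: "sqrt (c*d) = \<gamma>*\<delta>" using nn by (simp add: ab real_sqrt_mult)
  define R where "R = 1/2 * (\<gamma>*\<delta> * (\<alpha>^2+\<beta>^2) + \<alpha>*\<beta> * (\<gamma>^2+\<delta>^2)) - \<alpha>*\<beta>*\<gamma>*\<delta>"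
  have R1: "R = 1/2 * (\<gamma>*\<delta>*(\<alpha>-\<beta>)^2 + \<alpha>*\<beta>*(\<gamma>-\<delta>)^2) + \<alpha>*\<beta>*\<gamma>*\<delta>"
    unfolding R_def by (simp add: power2_eq_square algebra_simps)
  have R0: "R \<ge> 0" unfolding R1 using nn by (intro add_nonneg_nonneg mult_nonneg_nonneg) auto
  have "R^2 - (1/2*(\<alpha>^2*\<gamma>^2+\<beta>^2*\<delta>^2)) * (1/2*(\<beta>^2*\<gamma>^2+\<alpha>^2*\<delta>^2))
     = 1/2 * (\<gamma>*\<delta>*(\<alpha>-\<beta>)^2) * (\<alpha>*\<beta>*(\<gamma>-\<delta>)^2)"
    unfolding R_def by (simp add: power2_eq_square algebra_simps)
  moreover have "1/2 * (\<gamma>*\<delta>*(\<alpha>-\<beta>)^2) * (\<alpha>*\<beta>*(\<gamma>-\<delta>)^2) \<ge> 0"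
    using nn by (intro mult_nonneg_nonneg) auto
  ultimately have le: "(1/2*(\<alpha>^2*\<gamma>^2+\<beta>^2*\<delta>^2)) * (1/2*(\<beta>^2*\<gamma>^2+\<alpha>^2*\<delta>^2)) \<le> R^2"
    by linarith
  have "sqrt ((1/2*(\<alpha>^2*\<gamma>^2+\<beta>^2*\<delta>^2)) * (1/2*(\<beta>^2*\<gamma>^2+\<alpha>^2*\<delta>^2))) \<le> R"
    using real_sqrt_le_mono[OF le] R0 by simp
  then show ?thesis unfolding sab scd R_def by (simp add: ab)
qed

lemma bhatt_chan_minus_le:
  assumes "is_channel A" "is_channel B"
  shows "bhatt (chan_minus A B) \<le> bhatt A + bhatt B - bhatt A * bhatt B"
proof -
  have fa: "finite (fst A)" and fb: "finite (fst B)" using assms by (auto simp: is_channel_def)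
  let ?p = "\<lambda>y. sqrt (snd A y False * snd A y True)"
  let ?q = "\<lambda>y. sqrt (snd B y False * snd B y True)"
  let ?h = "\<lambda>C y. (snd C y False + snd C y True) / 2"
  have "bhatt (chan_minus A B) = (\<Sum>y1\<in>fst A. \<Sum>y2\<in>fst B.
      sqrt ((1/2*(snd A y1 False*snd B y2 False+snd A y1 True*snd B y2 True)) *
            (1/2*(snd A y1 True*snd B y2 False+snd A y1 False*snd B y2 True))))"
    unfolding bhatt_def chan_minus_def
    by (simp add: sum_chan_minus_outputs[OF fa fb] UNIV_bool algebra_simps)
  also have "\<dots> \<le> (\<Sum>y1\<in>fst A. \<Sum>y2\<in>fst B.
      1/2 * (?q y2 * (snd A y1 False + snd A y1 True) + ?p y1 * (snd B y2 False + snd B y2 True))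
      - ?p y1 * ?q y2)"
    using assms
    by (intro sum_mono sqrt_mixture_product_le) (auto simp: is_channel_def)
  also have "\<dots> = (\<Sum>y1\<in>fst A. \<Sum>y2\<in>fst B. ?h A y1 * ?q y2 + ?p y1 * ?h B y2 - ?p y1 * ?q y2)"
    by (intro sum.cong refl) (simp add: field_simps)
  also have "\<dots> = (\<Sum>y\<in>fst A. ?h A y) * bhatt B + bhatt A * (\<Sum>y\<in>fst B. ?h B y) - bhatt A * bhatt B"
    unfolding bhatt_def by (simp only: sum_subtractf sum.distrib sum_product)
  also have "\<dots> = bhatt A + bhatt B - bhatt A * bhatt B"
    using assms by (simp add: is_channel_def sum.distrib sum_divide_distrib[symmetric])
  finally show ?thesis .
qed

lemma log_bhatt_sum_le:
  fixes z1 z2 zm :: real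
  assumes "0 \<le> z1" "z1 \<le> 1" "0 \<le> z2" "z2 \<le> 1" "0 \<le> zm" "zm \<le> z1 + z2 - z1 * z2"
  shows "log 2 (2 / (1 + z1)) + log 2 (2 / (1 + z2))
      \<le> log 2 (2 / (1 + z1 * z2)) + log 2 (2 / (1 + zm))"
proof -
  have z12: "0 \<le> z1 * z2" using assms by simp
  have key: "(1 + z1 * z2) * (1 + zm) \<le> (1 + z1) * (1 + z2)"
  proof -
    have "(1 + z1 * z2) * (1 + zm) \<le> (1 + z1 * z2) * (1 + (z1 + z2 - z1 * z2))"
      using assms z12 by (intro mult_left_mono) auto
    also have "\<dots> = (1 + z1) * (1 + z2) - z1 * z2 * ((1 - z1) * (1 - z2))"
      by (simp add: algebra_simps)
    also have "\<dots> \<le> (1 + z1) * (1 + z2)"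
      using assms z12 by (simp add: mult_nonneg_nonneg)
    finally show ?thesis .
  qed
  have pos: "0 < (1 + z1 * z2) * (1 + zm)" using z12 assms by (simp add: add_pos_nonneg)
  have "log 2 (2 / (1 + z1)) + log 2 (2 / (1 + z2)) = log 2 (4 / ((1 + z1) * (1 + z2)))"
    using assms by (subst log_mult_pos[symmetric]) auto
  also have "\<dots> \<le> log 2 (4 / ((1 + z1 * z2) * (1 + zm)))"
    using key pos assms by (subst log_le_cancel_iff) (auto intro: divide_left_mono)
  also have "\<dots> = log 2 (2 / (1 + z1 * z2)) + log 2 (2 / (1 + zm))"
    using z12 assms by (subst log_mult_pos[symmetric]) (auto simp: add_pos_nonneg)
  finally show ?thesis .
qed

lemma Jf_plus_minus_ge:
  assumes "is_channel A" "is_channel B"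
  shows "Jf A + Jf B \<le> Jf (chan_plus A B) + Jf (chan_minus A B)"
  unfolding Jf_def bhatt_chan_plus[OF assms]
  using bhatt_bounds[OF assms(1)] bhatt_bounds[OF assms(2)]
    bhatt_bounds(1)[OF is_channel_chan_minus[OF assms]] bhatt_chan_minus_le[OF assms]
  by (intro log_bhatt_sum_le) auto

lemma Nn_mono: "a \<le> b \<Longrightarrow> Nn m a \<le> Nn m b"
  using lift_Suc_mono_le[of "Nn m"] by simp

lemma Nn_pos: "0 < Nn m n"
  by (induction n) auto

lemma length_mem_Slist: "s \<in> set (Slist m n) \<Longrightarrow> length s = n"
  by (induction n arbitrary: s) (auto simp: Let_def dest: in_set_takeD in_set_dropD)

lemma length_Slist: "length (Slist m n) = Nn m n"
proof (induction n)
  case 0 then show ?case by simp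
next
  case (Suc n)
  have "Nn m (n - (m - 1)) \<le> Nn m n" by (rule Nn_mono) simp
  with Suc show ?case by (simp add: Let_def)
qed

lemma distinct_Slist: "distinct (Slist m n)"
proof (induction n)
  case 0 then show ?case by simp
next
  case (Suc n)
  define L where "L = Slist m n"
  define k where "k = Nn m (n - (m - 1))"
  have dL: "distinct L" using Suc by (simp add: L_def)
  have disj: "set (take k L) \<inter> set (drop k L) = {}"
    using dL by (simp add: set_take_disj_set_drop_if_distinct)
  show ?case
    unfolding Slist.simps Let_def L_def[symmetric] k_def[symmetric]
    using dL disj
    by (auto simp: distinct_append distinct_map inj_on_def dest: in_set_takeD in_set_dropD)
qed

lemma Slist_prefix: "a \<le> b \<Longrightarrow> map (take a) (take (Nn m a) (Slist m b)) = Slist m a"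
proof (induction b arbitrary: a)
  case 0 then show ?case by simp
next
  case (Suc b)
  show ?case
  proof (cases "a = Suc b")
    case True
    then have "map (take a) (Slist m (Suc b)) = Slist m (Suc b)"
      using length_mem_Slist[of _ m "Suc b"] by (simp add: map_idI)
    then show ?thesis using True by (simp add: length_Slist[symmetric])
  next
    case False
    then have ab: "a \<le> b" using Suc by simp
    define L where "L = Slist m b"
    define k where "k = Nn m (b - (m - 1))"
    have lenL: "\<forall>s\<in>set L. length s = b" using length_mem_Slist L_def by blast
    have kL: "k \<le> length L" unfolding k_def L_def length_Slist by (rule Nn_mono) simp
    have aL: "Nn m a \<le> length L" unfolding L_def length_Slist by (rule Nn_mono[OF ab])
    define P where "P = map (\<lambda>s. s @ [SPlus]) (take k L) @ map (\<lambda>s. s @ [SStar]) (drop k L)"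
    have SL: "Slist m (Suc b) = P @ map (\<lambda>s. s @ [SMinus]) (take k L)"
      by (simp add: P_def Let_def L_def k_def)
    have lenP: "length P = length L" using kL by (simp add: P_def)
    have e1: "take (Nn m a) (Slist m (Suc b)) = take (Nn m a) P"
      unfolding SL using aL lenP by simp
    have e2: "map (take a) P = map (take a) L"
    proof -
      have "map (take a) P = map (take a) (take k L) @ map (take a) (drop k L)"
        unfolding P_def using lenL ab
        by (simp del: map_map) (auto dest: in_set_takeD in_set_dropD)
      also have "\<dots> = map (take a) L" by (simp flip: map_append)
      finally show ?thesis .
    qed
    have "map (take a) (take (Nn m a) (Slist m (Suc b))) = map (take a) (take (Nn m a) P)"
      by (simp only: e1)
    also have "\<dots> = take (Nn m a) (map (take a) P)" by (simp add: take_map)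
    also have "\<dots> = take (Nn m a) (map (take a) L)" by (simp only: e2)
    also have "\<dots> = map (take a) (take (Nn m a) L)" by (simp add: take_map)
    also have "\<dots> = Slist m a" using Suc.IH[OF ab] by (simp add: L_def)
    finally show ?thesis .
  qed
qed

lemma Wc_cong: "(\<forall>i<n. t ! i = t' ! i) \<Longrightarrow> Wc W m t n = Wc W m t' n"
proof (induction n rule: less_induct)
  case (less n)
  show ?case
  proof (cases n)
    case 0 then show ?thesis by simp
  next
    case (Suc n')
    have "Wc W m t n' = Wc W m t' n'" "Wc W m t (n' - (m - 1)) = Wc W m t' (n' - (m - 1))"
      "t ! n' = t' ! n'"
      using less Suc by auto
    then show ?thesis using Suc by (simp split: sym.split)
  qed
qed

lemma is_channel_Wc: "is_channel W \<Longrightarrow> is_channel (Wc W m t n)"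
proof (induction n rule: less_induct)
  case (less n)
  show ?case
  proof (cases n)
    case 0 then show ?thesis using less by simp
  next
    case (Suc n')
    have "is_channel (Wc W m t n')" "is_channel (Wc W m t (n' - (m - 1)))"
      using less Suc by auto
    then show ?thesis
      using Suc by (simp add: is_channel_chan_plus is_channel_chan_minus split: sym.split)
  qed
qed

lemma is_channel_Wt: "is_channel W \<Longrightarrow> is_channel (Wt W m t)"
  by (simp add: Wt_def is_channel_Wc)

lemma Wc_snoc_take: "j \<le> length s \<Longrightarrow> Wc W m (s @ [x]) j = Wt W m (take j s)"
  unfolding Wt_def by (auto intro!: Wc_cong simp: nth_append min_def)

lemma Wt_snoc: "Wt W m (s @ [x]) = (case x of
      SPlus \<Rightarrow> chan_plus (Wt W m (take (length s - (m - 1)) s)) (Wt W m s)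
    | SMinus \<Rightarrow> chan_minus (Wt W m (take (length s - (m - 1)) s)) (Wt W m s)
    | SStar \<Rightarrow> Wt W m s)"
proof -
  have "Wt W m (s @ [x]) = Wc W m (s @ [x]) (Suc (length s))" by (simp add: Wt_def)
  also have "\<dots> = (case x of
      SPlus \<Rightarrow> chan_plus (Wc W m (s @ [x]) (length s - (m - 1))) (Wc W m (s @ [x]) (length s))
    | SMinus \<Rightarrow> chan_minus (Wc W m (s @ [x]) (length s - (m - 1))) (Wc W m (s @ [x]) (length s))
    | SStar \<Rightarrow> Wc W m (s @ [x]) (length s))" by simp
  finally show ?thesis by (cases x) (simp_all add: Wc_snoc_take)
qed

definition J_total :: "'a chan \<Rightarrow> nat \<Rightarrow> nat \<Rightarrow> real" where
  "J_total W m n = (\<Sum>s\<leftarrow>Slist m n. Jf (Wt W m s))"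

lemma J_total_Suc_ge:
  assumes "is_channel W"
  shows "J_total W m (n - (m - 1)) + J_total W m n \<le> J_total W m (Suc n)"
proof -
  define g where "g = (\<lambda>s. Jf (Wt W m s))"
  define L where "L = Slist m n"
  define a where "a = n - (m - 1)"
  define k where "k = Nn m a"
  have old: "J_total W m n = (\<Sum>s\<leftarrow>take k L. g s) + (\<Sum>s\<leftarrow>drop k L. g s)"
    unfolding J_total_def g_def[symmetric] L_def[symmetric]
    by (simp flip: sum_list_append map_append)
  have prefix: "J_total W m a = (\<Sum>s\<leftarrow>take k L. g (take a s))"
  proof -
    have "map (take a) (take k L) = Slist m a"
      unfolding k_def L_def by (rule Slist_prefix) (simp add: a_def)
    then have "J_total W m a = (\<Sum>s\<leftarrow>map (take a) (take k L). g s)"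
      by (simp add: J_total_def g_def)
    then show ?thesis by (simp add: o_def)
  qed
  have new: "J_total W m (Suc n)
      = (\<Sum>s\<leftarrow>take k L. g (s @ [SPlus]) + g (s @ [SMinus])) + (\<Sum>s\<leftarrow>drop k L. g s)"
  proof -
    have "g (s @ [SStar]) = g s" for s by (simp add: g_def Wt_snoc)
    then show ?thesis
      unfolding J_total_def g_def[symmetric]
      by (simp add: Let_def L_def k_def a_def sum_list_addf o_def)
  qed
  have pair: "g (take a s) + g s \<le> g (s @ [SPlus]) + g (s @ [SMinus])" if "s \<in> set (take k L)" for s
  proof -
    have "length s - (m - 1) = a"
      using that length_mem_Slist by (auto simp: L_def a_def dest: in_set_takeD)
    then show ?thesis unfolding g_def Wt_snoc by (simp add: Jf_plus_minus_ge is_channel_Wt assms)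
  qed
  have "(\<Sum>s\<leftarrow>take k L. g (take a s)) + (\<Sum>s\<leftarrow>take k L. g s)
      \<le> (\<Sum>s\<leftarrow>take k L. g (s @ [SPlus]) + g (s @ [SMinus]))"
    using sum_list_mono[OF pair] by (simp add: sum_list_addf)
  then show ?thesis unfolding old prefix new a_def[symmetric] by simp
qed

lemma min_divide_le_divide_add:
  fixes a b p q s :: real
  assumes "0 < p" "0 < q" "a + b \<le> s"
  shows "min (a / p) (b / q) \<le> s / (p + q)"
proof -
  have "min (a / p) (b / q) * (p + q) = min (a / p) (b / q) * p + min (a / p) (b / q) * q"
    by (simp add: distrib_left)
  also have "\<dots> \<le> a / p * p + b / q * q"
    using assms by (intro add_mono mult_right_mono) auto
  also have "\<dots> \<le> s" using assms by simp
  finally show ?thesis using assms by (simp add: pos_le_divide_eq)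
qed

lemma EJ_eq_J_total: "EJ m W z = J_total W m (nat z) / real (Nn m (nat z))"
  by (simp add: EJ_def Nz_def J_total_def Wt_def sum_list_distinct_conv_sum_set[OF distinct_Slist])

lemma EJ_ge_min:
  assumes "is_channel W" "m \<ge> 1" "z \<ge> 1"
  shows "min (EJ m W (z - 1)) (EJ m W (z - int m)) \<le> EJ m W z"
proof -
  define n where "n = nat (z - 1)"
  have "nat z = Suc n" "nat (z - 1) = n" "nat (z - int m) = n - (m - 1)"
    using assms by (simp_all add: n_def)
  then show ?thesis
    unfolding EJ_eq_J_total using J_total_Suc_ge[OF assms(1), of m n] Nn_pos[of m]
    by (simp add: min_divide_le_divide_add)
qed

lemma lower_bound_propagates:
  fixes E :: "int \<Rightarrow> real"
  assumes "m \<ge> 1"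
    and window: "\<And>z. a - int m < z \<Longrightarrow> z \<le> a \<Longrightarrow> h \<le> E z"
    and step: "\<And>z. a < z \<Longrightarrow> min (E (z - 1)) (E (z - int m)) \<le> E z"
    and "a - int m < z"
  shows "h \<le> E z"
  using assms(4)
proof (induction "nat (z - a)" arbitrary: z rule: less_induct)
  case less
  show ?case
  proof (cases "z \<le> a")
    case True
    then show ?thesis using window less.prems by blast
  next
    case False
    have "h \<le> E (z - 1)" "h \<le> E (z - int m)"
      using False assms(1) by (auto intro!: less.hyps)
    then show ?thesis using step[of z] False by linarith
  qed
qed

theorem lemma2:
  fixes m :: nat and Y :: "'a set" and V :: "'a \<Rightarrow> bool \<Rightarrow> real" and k :: int
  assumes "m \<ge> 1" and "bdmc Y V" and "k \<ge> 1"
  shows "EJhat m (base_chan Y V) k \<ge> EJhat m (base_chan Y V) (k - 1)"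
proof -
  define W where "W = base_chan Y V"
  define a where "a = (k - 1) * int m"
  have "a \<ge> 0" using assms by (simp add: a_def)
  have window: "EJhat m W (k - 1) \<le> EJ m W z" if "a - int m < z" "z \<le> a" for z
  proof -
    have "z = (k - 1) * int m - int (nat (a - z))" "nat (a - z) < m"
      using that by (auto simp: a_def)
    then show ?thesis unfolding EJhat_def by (metis Min_le atLeastLessThan_iff finite_atLeastLessThan
          finite_imageI image_eqI zero_le)
  qed
  have step: "min (EJ m W (z - 1)) (EJ m W (z - int m)) \<le> EJ m W z" if "a < z" for z
    using EJ_ge_min[OF is_channel_base_chan[OF assms(2)] assms(1)] that \<open>a \<ge> 0\<close>
    by (simp add: W_def)
  have "EJhat m W (k - 1) \<le> EJ m W (k * int m - int i)" if "i < m" for i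
  proof (rule lower_bound_propagates[OF assms(1) window step])
    show "a - int m < k * int m - int i" using that by (simp add: a_def algebra_simps)
  qed
  then show ?thesis
    using assms(1) by (simp add: EJhat_def W_def)
qed

end
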